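(* Let $p$ be a probability density on $\mathbb{R}^d$ that is log-concave, strictly positive on $\mathbb{R}^d$, and three times differentiable with $\sup_x\|\nabla^3\ln p(x)\|_F<\infty$. Let $\tau>0$, $y\in\mathbb{R}^d$, $F(x):=\tfrac12\|y-x\|^2-\tau\ln p(x)$ and, for $\sigma>0$, $F_\sigma(x):=\tfrac12\|y-x\|^2-\tau\ln p_\sigma(x)$. Let $\mathrm{prox}_{-\tau\ln p}(y):=\arg\min F$ and $\mathrm{prox}_{-\tau\ln p_\sigma}(y):=\arg\min F_\sigma$. Then $\mathrm{prox}_{-\tau\ln p_\sigma}(y)\to\mathrm{prox}_{-\tau\ln p}(y)$ as $\sigma\to0$.
   Context: For $\sigma>0$, $p_\sigma$ denotes the density of $X+\sigma\varepsilon$ where $X\sim p$ and $\varepsilon\sim\mathcal N(0,I_d)$ are independent. For a tensor $A\in\mathbb{R}^{d\times d\times d}$, $\|A\|_F=(\sum_{i,j,k}A_{ijk}^2)^{1/2}$. Both $F$ and $F_\sigma$ are strongly convex, so the minimisers are unique. *)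

theory Defs
  imports "HOL-Analysis.Analysis" "HOL-Probability.Probability"
begin

definition gauss_density :: "real \<Rightarrow> 'a::euclidean_space \<Rightarrow> real" where
  "gauss_density \<sigma> w = (2 * pi * \<sigma>\<^sup>2) powr (- real DIM('a) / 2) * exp (- (norm w)\<^sup>2 / (2 * \<sigma>\<^sup>2))"

text \<open>p_sigma: density of X + sigma*eps with X ~ p, eps ~ N(0,I) independent,
  i.e. the convolution of p with the N(0, sigma^2 I) density.\<close>
definition smoothed_density :: "('a::euclidean_space \<Rightarrow> real) \<Rightarrow> real \<Rightarrow> 'a \<Rightarrow> real" where
  "smoothed_density p \<sigma> x = (\<integral>z. p z * gauss_density \<sigma> (x - z) \<partial>lborel)"

text \<open>g is three times (Frechet) differentiable on the whole space, with gradient G1,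
  Hessian H (H x v = Hessian at x applied to v) and third derivative T
  (T x h v = derivative of the Hessian at x in direction h, applied to v), and the
  Frobenius norm of the third-derivative tensor is bounded uniformly in x.\<close>
definition thrice_diff_bdd_third :: "('a::euclidean_space \<Rightarrow> real) \<Rightarrow> bool" where
  "thrice_diff_bdd_third g \<longleftrightarrow>
    (\<exists>G1 H T.
      (\<forall>x. (g has_derivative (\<lambda>h. G1 x \<bullet> h)) (at x)) \<and>
      (\<forall>x. (G1 has_derivative H x) (at x)) \<and>
      (\<forall>x v. ((\<lambda>y. H y v) has_derivative (\<lambda>h. T x h v)) (at x)) \<and>
      (\<exists>M. \<forall>x. sqrt (\<Sum>i\<in>Basis. \<Sum>j\<in>Basis. \<Sum>k\<in>Basis. (T x i j \<bullet> k)\<^sup>2) \<le> M))"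

definition prox :: "real \<Rightarrow> ('a::euclidean_space \<Rightarrow> real) \<Rightarrow> 'a \<Rightarrow> 'a" where
  "prox \<tau> \<phi> y = arg_min (\<lambda>x. (1/2) * (norm (y - x))\<^sup>2 + \<tau> * \<phi> x) (\<lambda>_. True)"

end

theory Submission
  imports Defs
begin

text \<open>Let \<open>x\<^sub>0\<close> be the proximal point of \<open>-\<tau> ln p\<close> and \<open>g\<close> the gradient of \<open>ln p\<close> at \<open>x\<^sub>0\<close>,
  so that \<open>x\<^sub>0 - y = \<tau> g\<close>. Log-concavity puts \<open>p\<close> below its tangent exponential
  \<open>p(x\<^sub>0) exp (g \<bullet> (z - x\<^sub>0))\<close>, and by the Gaussian moment generating function convolution
  only costs this bound a factor \<open>exp (\<sigma>\<^sup>2 |g|\<^sup>2 / 2)\<close>. Together with the optimality condition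
  this gives \<open>F\<^sub>\<sigma>(x) \<ge> F(x\<^sub>0) + |x - x\<^sub>0|\<^sup>2 / 2 - \<tau> \<sigma>\<^sup>2 |g|\<^sup>2 / 2\<close> for all \<open>x\<close>. Evaluating \<open>F\<^sub>\<sigma>\<close>
  at its own minimiser and comparing with \<open>F\<^sub>\<sigma>(x\<^sub>0)\<close>, which is asymptotically at most \<open>F(x\<^sub>0)\<close>
  because \<open>p\<close> is continuous at \<open>x\<^sub>0\<close>, forces \<open>|x\<^sub>\<sigma> - x\<^sub>0| \<rightarrow> 0\<close>.\<close>

section \<open>Gaussian moment generating function\<close>

lemma power2_norm_eq_sum_Basis: "(norm (u::'a::euclidean_space))\<^sup>2 = (\<Sum>b\<in>Basis. (u \<bullet> b)\<^sup>2)"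
  unfolding power2_norm_eq_inner by (subst euclidean_inner) (simp add: power2_eq_square)

lemma nn_integral_exp_linear_times_gaussian:
  fixes \<sigma> a m :: real
  assumes "\<sigma> > 0"
  shows "(\<integral>\<^sup>+t. ennreal (exp (a*t - (t - m)\<^sup>2/(2*\<sigma>\<^sup>2))) \<partial>lborel)
         = ennreal (sqrt (2*pi*\<sigma>\<^sup>2) * exp (a*m + \<sigma>\<^sup>2*a\<^sup>2/2))"
proof -
  let ?c = "sqrt (2*pi*\<sigma>\<^sup>2) * exp (a*m + \<sigma>\<^sup>2*a\<^sup>2/2)"
  \<comment> \<open>completing the square: the integrand is \<open>?c\<close> times the normal density centred at \<open>m + a \<sigma>\<^sup>2\<close>\<close>
  have eq: "exp (a*t - (t - m)\<^sup>2/(2*\<sigma>\<^sup>2)) = ?c * normal_density (m + a*\<sigma>\<^sup>2) \<sigma> t" for t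
  proof -
    have e: "a*t - (t - m)\<^sup>2/(2*\<sigma>\<^sup>2) = (a*m + \<sigma>\<^sup>2*a\<^sup>2/2) + (-(t - (m + a*\<sigma>\<^sup>2))\<^sup>2/(2*\<sigma>\<^sup>2))"
      using assms by (simp add: field_simps power2_eq_square)
    have "sqrt (2*pi*\<sigma>\<^sup>2) > 0" using assms by simp
    then show ?thesis using assms unfolding normal_density_def e exp_add by (simp add: field_simps)
  qed
  have "(\<integral>\<^sup>+t. ennreal (exp (a*t - (t - m)\<^sup>2/(2*\<sigma>\<^sup>2))) \<partial>lborel)
      = ennreal ?c * (\<integral>\<^sup>+t. ennreal (normal_density (m + a*\<sigma>\<^sup>2) \<sigma> t) \<partial>lborel)"
    unfolding eq by (subst nn_integral_cmult[symmetric]) (auto simp: ennreal_mult)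
  also have "(\<integral>\<^sup>+t. ennreal (normal_density (m + a*\<sigma>\<^sup>2) \<sigma> t) \<partial>lborel) = 1"
    using integrable_normal_density[OF assms] integral_normal_density[OF assms]
    by (subst nn_integral_eq_integral) auto
  finally show ?thesis by simp
qed

lemma exp_inner_times_gauss_density_eq_prod:
  fixes x z :: "'a::euclidean_space"
  assumes "\<sigma> > 0"
  shows "exp (g \<bullet> z) * gauss_density \<sigma> (x - z) =
    (\<Prod>b\<in>Basis. (2*pi*\<sigma>\<^sup>2) powr (-1/2) * exp ((g\<bullet>b) * (z\<bullet>b) - ((z\<bullet>b) - (x\<bullet>b))\<^sup>2/(2*\<sigma>\<^sup>2)))"
proof -
  have "(\<Prod>b\<in>Basis. (2*pi*\<sigma>\<^sup>2) powr (-1/2) * exp ((g\<bullet>b) * (z\<bullet>b) - ((z\<bullet>b) - (x\<bullet>b))\<^sup>2/(2*\<sigma>\<^sup>2)))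
     = ((2*pi*\<sigma>\<^sup>2) powr (-1/2)) ^ DIM('a) * exp (\<Sum>b\<in>Basis. (g\<bullet>b) * (z\<bullet>b) - ((z\<bullet>b) - (x\<bullet>b))\<^sup>2/(2*\<sigma>\<^sup>2))"
    by (simp add: prod.distrib exp_sum)
  also have "((2*pi*\<sigma>\<^sup>2) powr (-1/2)) ^ DIM('a) = ((2*pi*\<sigma>\<^sup>2) powr (-1/2)) powr (real DIM('a))"
    using assms by (subst powr_realpow) auto
  also have "\<dots> = (2*pi*\<sigma>\<^sup>2) powr (- real DIM('a) / 2)"
    by (simp add: powr_powr)
  also have "(\<Sum>b\<in>Basis. (g\<bullet>b) * (z\<bullet>b) - ((z\<bullet>b) - (x\<bullet>b))\<^sup>2/(2*\<sigma>\<^sup>2))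
      = g \<bullet> z - (norm (x - z))\<^sup>2 / (2*\<sigma>\<^sup>2)"
  proof -
    have "(norm (x - z))\<^sup>2 = (\<Sum>b\<in>Basis. ((z\<bullet>b) - (x\<bullet>b))\<^sup>2)"
      unfolding power2_norm_eq_sum_Basis[of "x - z"] by (simp add: inner_diff_left power2_commute)
    then show ?thesis
      by (simp add: euclidean_inner[of g z] sum_subtractf sum_divide_distrib)
  qed
  finally show ?thesis unfolding gauss_density_def by (simp add: exp_diff exp_minus field_simps)
qed

lemma nn_integral_exp_inner_times_gauss_density:
  fixes x g :: "'a::euclidean_space"
  assumes "\<sigma> > 0"
  shows "(\<integral>\<^sup>+z. ennreal (exp (g \<bullet> z) * gauss_density \<sigma> (x - z)) \<partial>lborel)
     = ennreal (exp (g \<bullet> x + \<sigma>\<^sup>2 * (norm g)\<^sup>2 / 2))"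
proof -
  define f where "f b t = ennreal ((2*pi*\<sigma>\<^sup>2) powr (-1/2) * exp ((g\<bullet>b) * t - (t - (x\<bullet>b))\<^sup>2/(2*\<sigma>\<^sup>2)))" for b t
  have c: "(2*pi*\<sigma>\<^sup>2) powr (-1/2) * sqrt (2*pi*\<sigma>\<^sup>2) = 1"
    using assms by (simp add: powr_half_sqrt[symmetric] powr_add[symmetric])
  have "(\<integral>\<^sup>+z. ennreal (exp (g \<bullet> z) * gauss_density \<sigma> (x - z)) \<partial>lborel)
      = (\<integral>\<^sup>+z. (\<Prod>b\<in>Basis. f b (z \<bullet> b)) \<partial>lborel)"
    unfolding exp_inner_times_gauss_density_eq_prod[OF assms] f_def
    by (subst prod_ennreal) auto
  also have "\<dots> = (\<Prod>b\<in>Basis. (\<integral>\<^sup>+t. f b t \<partial>lborel))"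
    by (rule nn_integral_lborel_prod) (auto simp: f_def)
  also have "\<dots> = (\<Prod>b\<in>Basis. ennreal (exp ((g\<bullet>b) * (x\<bullet>b) + \<sigma>\<^sup>2 * (g\<bullet>b)\<^sup>2/2)))"
  proof (rule prod.cong[OF refl])
    fix b :: 'a
    have "(\<integral>\<^sup>+t. f b t \<partial>lborel) = ennreal ((2*pi*\<sigma>\<^sup>2) powr (-1/2)) *
        (\<integral>\<^sup>+t. ennreal (exp ((g\<bullet>b) * t - (t - (x\<bullet>b))\<^sup>2/(2*\<sigma>\<^sup>2))) \<partial>lborel)"
      unfolding f_def by (subst nn_integral_cmult[symmetric]) (auto simp: ennreal_mult)
    also have "\<dots> = ennreal ((2*pi*\<sigma>\<^sup>2) powr (-1/2) * sqrt (2*pi*\<sigma>\<^sup>2) * exp ((g\<bullet>b) * (x\<bullet>b) + \<sigma>\<^sup>2 * (g\<bullet>b)\<^sup>2/2))"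
      unfolding nn_integral_exp_linear_times_gaussian[OF assms] by (simp add: ennreal_mult mult.assoc)
    also have "\<dots> = ennreal (exp ((g\<bullet>b) * (x\<bullet>b) + \<sigma>\<^sup>2 * (g\<bullet>b)\<^sup>2/2))"
      unfolding c by simp
    finally show "(\<integral>\<^sup>+t. f b t \<partial>lborel) = ennreal (exp ((g\<bullet>b) * (x\<bullet>b) + \<sigma>\<^sup>2 * (g\<bullet>b)\<^sup>2/2))" .
  qed
  also have "\<dots> = ennreal (exp (\<Sum>b\<in>Basis. (g\<bullet>b) * (x\<bullet>b) + \<sigma>\<^sup>2 * (g\<bullet>b)\<^sup>2/2))"
    by (simp add: prod_ennreal exp_sum)
  also have "(\<Sum>b\<in>Basis. (g\<bullet>b) * (x\<bullet>b) + \<sigma>\<^sup>2 * (g\<bullet>b)\<^sup>2/2) = g \<bullet> x + \<sigma>\<^sup>2 * (norm g)\<^sup>2 / 2"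
    by (simp add: sum.distrib euclidean_inner[of g x] power2_norm_eq_sum_Basis[of g]
        sum_divide_distrib[symmetric] sum_distrib_left[symmetric])
  finally show ?thesis .
qed

lemma gauss_density_nonneg: "gauss_density \<sigma> w \<ge> 0"
  unfolding gauss_density_def by simp

lemma gauss_density_le: "gauss_density \<sigma> (w::'a::euclidean_space) \<le> (2 * pi * \<sigma>\<^sup>2) powr (- real DIM('a) / 2)"
  unfolding gauss_density_def by (rule mult_left_le) auto

lemma norm_times_gauss_density_le:
  "norm (a * gauss_density \<sigma> (w::'a::euclidean_space)) \<le> (2 * pi * \<sigma>\<^sup>2) powr (- real DIM('a) / 2) * norm a"
proof -
  have "\<bar>a\<bar> * gauss_density \<sigma> w \<le> \<bar>a\<bar> * (2 * pi * \<sigma>\<^sup>2) powr (- real DIM('a) / 2)"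
    by (rule mult_left_mono[OF gauss_density_le]) simp
  then show ?thesis by (simp add: abs_mult gauss_density_nonneg mult.commute)
qed

lemma continuous_on_gauss_density: "continuous_on UNIV (gauss_density \<sigma> :: 'a::euclidean_space \<Rightarrow> real)"
  unfolding gauss_density_def[abs_def] divide_inverse by (intro continuous_intros)

lemma borel_measurable_gauss_density[measurable]:
  "gauss_density \<sigma> \<in> (borel_measurable borel :: ('a::euclidean_space \<Rightarrow> real) set)"
  using continuous_on_gauss_density by (rule borel_measurable_continuous_onI)

lemma has_bochner_integral_exp_inner_times_gauss_density:
  fixes x g :: "'a::euclidean_space"
  assumes "\<sigma> > 0"
  shows "has_bochner_integral lborel (\<lambda>z. exp (g \<bullet> z) * gauss_density \<sigma> (x - z))
           (exp (g \<bullet> x + \<sigma>\<^sup>2 * (norm g)\<^sup>2 / 2))"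
  by (rule has_bochner_integral_nn_integral)
     (auto simp: gauss_density_nonneg nn_integral_exp_inner_times_gauss_density[OF assms])

lemma has_bochner_integral_exp_inner_diff_times_gauss_density:
  fixes x g :: "'a::euclidean_space"
  assumes "\<sigma> > 0"
  shows "has_bochner_integral lborel (\<lambda>z. exp (g \<bullet> (z - x)) * gauss_density \<sigma> (x - z))
           (exp (\<sigma>\<^sup>2 * (norm g)\<^sup>2 / 2))"
proof -
  have "has_bochner_integral lborel (\<lambda>z. exp (- (g \<bullet> x)) * (exp (g \<bullet> z) * gauss_density \<sigma> (x - z)))
      (exp (- (g \<bullet> x)) * exp (g \<bullet> x + \<sigma>\<^sup>2 * (norm g)\<^sup>2 / 2))"
    by (intro has_bochner_integral_mult_right has_bochner_integral_exp_inner_times_gauss_density assms)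
  then show ?thesis
    by (simp add: exp_add[symmetric] inner_diff_right mult.assoc[symmetric])
qed

section \<open>Bounds on the smoothed density\<close>

lemma integrable_times_gauss_density:
  fixes p :: "'a::euclidean_space \<Rightarrow> real"
  assumes "integrable lborel p"
  shows "integrable lborel (\<lambda>z. p z * gauss_density \<sigma> (x - z))"
proof (rule Bochner_Integration.integrable_bound)
  let ?C = "(2 * pi * \<sigma>\<^sup>2) powr (- real DIM('a) / 2)"
  show "integrable lborel (\<lambda>z. ?C * p z)"
    using assms by simp
  have [measurable]: "p \<in> borel_measurable lborel"
    using assms by simp
  show "(\<lambda>z. p z * gauss_density \<sigma> (x - z)) \<in> borel_measurable lborel"
    by measurable
  have "norm (?C * p z) = ?C * norm (p z)" for z
    by (simp add: abs_mult)
  then show "AE z in lborel. norm (p z * gauss_density \<sigma> (x - z)) \<le> norm (?C * p z)"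
    by (intro AE_I2) (simp only: norm_times_gauss_density_le)
qed

lemma smoothed_density_pos:
  fixes p :: "'a::euclidean_space \<Rightarrow> real"
  assumes "integrable lborel p" "\<And>x. p x > 0" "\<sigma> > 0"
  shows "smoothed_density p \<sigma> x > 0"
proof -
  have pos: "p z * gauss_density \<sigma> (x - z) > 0" for z
    using assms(2,3) by (simp add: gauss_density_def)
  have nonneg: "0 \<le> smoothed_density p \<sigma> x"
    unfolding smoothed_density_def using pos by (simp add: less_imp_le)
  have "\<not> (AE z in lborel. p z * gauss_density \<sigma> (x - z) = 0)"
  proof
    assume "AE z in lborel. p z * gauss_density \<sigma> (x - z) = 0"
    then have "AE z in (lborel::'a measure). False"
      by (rule eventually_mono) (metis pos less_irrefl)
    then show False by (simp add: eventually_False ae_filter_eq_bot_iff)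
  qed
  then have "smoothed_density p \<sigma> x \<noteq> 0"
    unfolding smoothed_density_def
    using pos by (subst integral_nonneg_eq_0_iff_AE)
      (auto intro: integrable_times_gauss_density[OF assms(1)] less_imp_le)
  with nonneg show ?thesis by simp
qed

lemma continuous_on_smoothed_density:
  fixes p :: "'a::euclidean_space \<Rightarrow> real"
  assumes "integrable lborel p"
  shows "continuous_on UNIV (smoothed_density p \<sigma>)"
proof (rule continuous_on_sequentiallyI)
  fix u :: "nat \<Rightarrow> 'a" and a assume u: "u \<longlonglongrightarrow> a"
  have [measurable]: "p \<in> borel_measurable lborel" using assms by simp
  let ?C = "(2 * pi * \<sigma>\<^sup>2) powr (- real DIM('a) / 2)"
  show "(\<lambda>n. smoothed_density p \<sigma> (u n)) \<longlonglongrightarrow> smoothed_density p \<sigma> a"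
    unfolding smoothed_density_def
  proof (rule integral_dominated_convergence[where w="\<lambda>z. ?C * norm (p z)"])
    show "integrable lborel (\<lambda>z. ?C * norm (p z))" using assms by simp
    show "AE z in lborel. (\<lambda>n. p z * gauss_density \<sigma> (u n - z)) \<longlonglongrightarrow> p z * gauss_density \<sigma> (a - z)"
    proof (rule AE_I2)
      fix z
      have "(\<lambda>n. u n - z) \<longlonglongrightarrow> a - z"
        using u by (intro tendsto_intros)
      then show "(\<lambda>n. p z * gauss_density \<sigma> (u n - z)) \<longlonglongrightarrow> p z * gauss_density \<sigma> (a - z)"
        by (intro tendsto_mult_left continuous_on_tendsto_compose[OF continuous_on_gauss_density]) auto
    qed
    show "AE z in lborel. norm (p z * gauss_density \<sigma> (u n - z)) \<le> ?C * norm (p z)" for n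
      by (intro AE_I2) (rule norm_times_gauss_density_le)
  qed measurable
qed

lemma smoothed_density_le_exp_affine:
  fixes p :: "'a::euclidean_space \<Rightarrow> real"
  assumes "integrable lborel p" "\<sigma> > 0" "\<And>z. p z \<le> exp (c + g \<bullet> z)"
  shows "smoothed_density p \<sigma> x \<le> exp (c + g \<bullet> x + \<sigma>\<^sup>2 * (norm g)\<^sup>2 / 2)"
proof -
  have hb: "has_bochner_integral lborel (\<lambda>z. exp c * (exp (g \<bullet> z) * gauss_density \<sigma> (x - z)))
      (exp c * exp (g \<bullet> x + \<sigma>\<^sup>2 * (norm g)\<^sup>2 / 2))"
    by (intro has_bochner_integral_mult_right has_bochner_integral_exp_inner_times_gauss_density assms(2))
  have "smoothed_density p \<sigma> x \<le> (\<integral>z. exp c * (exp (g \<bullet> z) * gauss_density \<sigma> (x - z)) \<partial>lborel)"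
    unfolding smoothed_density_def
  proof (rule integral_mono)
    show "integrable lborel (\<lambda>z. p z * gauss_density \<sigma> (x - z))"
      by (rule integrable_times_gauss_density[OF assms(1)])
    show "integrable lborel (\<lambda>z. exp c * (exp (g \<bullet> z) * gauss_density \<sigma> (x - z)))"
      using hb by (simp add: has_bochner_integral_iff)
    show "p z * gauss_density \<sigma> (x - z) \<le> exp c * (exp (g \<bullet> z) * gauss_density \<sigma> (x - z))" for z
      using mult_right_mono[OF assms(3)[of z] gauss_density_nonneg[of \<sigma> "x - z"]] by (simp add: exp_add)
  qed
  also have "\<dots> = exp c * exp (g \<bullet> x + \<sigma>\<^sup>2 * (norm g)\<^sup>2 / 2)"
    using hb by (rule has_bochner_integral_integral_eq)
  finally show ?thesis by (simp add: exp_add[symmetric] add.assoc)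
qed

lemma exp_plus_exp_minus_ge_power2: "(t::real)\<^sup>2 / 4 \<le> exp t + exp (- t)"
proof -
  have "s\<^sup>2 / 4 \<le> exp s" if "s \<ge> 0" for s :: real
  proof -
    have "s\<^sup>2 / 4 \<le> (1 + s/2)\<^sup>2" using that by (simp add: power2_eq_square field_simps)
    also have "\<dots> \<le> (exp (s/2))\<^sup>2" using that by (intro power_mono exp_ge_add_one_self) auto
    also have "\<dots> = exp s" by (simp add: exp_double[symmetric])
    finally show ?thesis .
  qed
  from this[of "\<bar>t\<bar>"] have "t\<^sup>2 / 4 \<le> exp \<bar>t\<bar>" by simp
  also have "\<dots> \<le> exp t + exp (- t)"
    using exp_gt_zero[of t] exp_gt_zero[of "- t"] by (simp add: abs_if)
  finally show ?thesis .
qed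

lemma power2_norm_le_sum_Basis_exp:
  "(norm (v::'a::euclidean_space))\<^sup>2 / 4 \<le> (\<Sum>b\<in>Basis. exp (b \<bullet> v) + exp (- (b \<bullet> v)))"
  unfolding power2_norm_eq_sum_Basis[of v] sum_divide_distrib
  by (intro sum_mono) (simp only: inner_commute[of v] exp_plus_exp_minus_ge_power2)

text \<open>A Chernoff-type bound: the Gaussian mass outside the ball \<open>ball x r\<close> is at most
  \<open>8 d exp (1/2) \<sigma>\<^sup>2 / r\<^sup>2\<close>, because the indicator of the complement of the ball is dominated by
  \<open>(4 \<sigma>\<^sup>2 / r\<^sup>2) \<Sum>\<^sub>b (exp ((z - x) \<bullet> b / \<sigma>) + exp (- (z - x) \<bullet> b / \<sigma>))\<close>, whose integral
  against the Gaussian is explicit.\<close>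
lemma smoothed_density_ge:
  fixes p :: "'a::euclidean_space \<Rightarrow> real"
  assumes int: "integrable lborel p" and sig: "\<sigma> > 0" and r: "r > 0" and q: "q \<ge> 0"
    and near: "\<And>z. dist z x < r \<Longrightarrow> q \<le> p z" and nonneg: "\<And>z. p z \<ge> 0"
  shows "q * (1 - 8 * real DIM('a) * exp (1/2) * \<sigma>\<^sup>2 / r\<^sup>2) \<le> smoothed_density p \<sigma> x"
proof -
  define K where "K = 4 * \<sigma>\<^sup>2 / r\<^sup>2"
  define S where "S z = (\<Sum>b\<in>Basis. exp (((1/\<sigma>) *\<^sub>R b) \<bullet> (z - x)) + exp ((-(1/\<sigma>) *\<^sub>R b) \<bullet> (z - x)))"
    for z
  have gauss: "has_bochner_integral lborel (\<lambda>z. gauss_density \<sigma> (x - z)) 1"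
    using has_bochner_integral_exp_inner_diff_times_gauss_density[OF sig, of 0 x] by simp
  have unit: "has_bochner_integral lborel (\<lambda>z. exp ((s *\<^sub>R b) \<bullet> (z - x)) * gauss_density \<sigma> (x - z))
      (exp (1/2))" if "b \<in> Basis" "\<bar>s\<bar> = 1/\<sigma>" for b :: 'a and s
  proof -
    have "(norm (s *\<^sub>R b))\<^sup>2 = 1 / \<sigma>\<^sup>2"
      using that by (simp add: power_divide)
    then have "\<sigma>\<^sup>2 * (norm (s *\<^sub>R b))\<^sup>2 / 2 = 1/2"
      using sig by simp
    then show ?thesis
      using has_bochner_integral_exp_inner_diff_times_gauss_density[OF sig, of "s *\<^sub>R b" x] by simp
  qed
  have S: "has_bochner_integral lborel (\<lambda>z. S z * gauss_density \<sigma> (x - z))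
      (\<Sum>b\<in>(Basis::'a set). exp (1/2) + exp (1/2))"
    unfolding S_def sum_distrib_right distrib_right
    using sig by (intro has_bochner_integral_sum has_bochner_integral_add unit) auto
  have lower: "q * (1 - K * S z) \<le> p z" for z
  proof (cases "dist z x < r")
    case True
    have "0 \<le> S z" unfolding S_def by (intro sum_nonneg add_nonneg_nonneg) auto
    then have "q * (1 - K * S z) \<le> q" using q by (simp add: K_def mult_nonneg_nonneg algebra_simps)
    then show ?thesis using near[OF True] by linarith
  next
    case False
    then have "r\<^sup>2 \<le> (norm (z - x))\<^sup>2" using r by (intro power_mono) (auto simp: dist_norm)
    also have "(norm (z - x))\<^sup>2 = 4 * \<sigma>\<^sup>2 * ((norm ((1/\<sigma>) *\<^sub>R (z - x)))\<^sup>2 / 4)"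
      using sig by (simp add: power_mult_distrib power_divide)
    also have "\<dots> \<le> 4 * \<sigma>\<^sup>2 * S z"
      using power2_norm_le_sum_Basis_exp[of "(1/\<sigma>) *\<^sub>R (z - x)"]
      by (intro mult_left_mono) (simp_all add: S_def)
    finally have "1 \<le> K * S z" using r by (simp add: K_def)
    then have "q * (1 - K * S z) \<le> 0" using q by (simp add: mult_nonneg_nonpos)
    then show ?thesis using nonneg[of z] by linarith
  qed
  have LB: "has_bochner_integral lborel (\<lambda>z. q * gauss_density \<sigma> (x - z) - q * K * (S z * gauss_density \<sigma> (x - z)))
      (q * (1 - 8 * real DIM('a) * exp (1/2) * \<sigma>\<^sup>2 / r\<^sup>2))"
  proof -
    have "q * 1 - q * K * (\<Sum>b\<in>(Basis::'a set). exp (1/2) + exp (1/2))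
        = q * (1 - 8 * real DIM('a) * exp (1/2) * \<sigma>\<^sup>2 / r\<^sup>2)"
      by (simp add: K_def algebra_simps)
    with has_bochner_integral_diff[OF has_bochner_integral_mult_right[OF gauss, of q]
        has_bochner_integral_mult_right[OF S, of "q * K"]]
    show ?thesis by simp
  qed
  have "q * (1 - 8 * real DIM('a) * exp (1/2) * \<sigma>\<^sup>2 / r\<^sup>2)
      = (\<integral>z. q * gauss_density \<sigma> (x - z) - q * K * (S z * gauss_density \<sigma> (x - z)) \<partial>lborel)"
    using LB by (rule has_bochner_integral_integral_eq[symmetric])
  also have "\<dots> \<le> smoothed_density p \<sigma> x"
    unfolding smoothed_density_def
  proof (rule integral_mono)
    show "integrable lborel (\<lambda>z. q * gauss_density \<sigma> (x - z) - q * K * (S z * gauss_density \<sigma> (x - z)))"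
      using LB by (rule integrable.intros)
    show "integrable lborel (\<lambda>z. p z * gauss_density \<sigma> (x - z))"
      by (rule integrable_times_gauss_density[OF int])
    show "q * gauss_density \<sigma> (x - z) - q * K * (S z * gauss_density \<sigma> (x - z))
        \<le> p z * gauss_density \<sigma> (x - z)" for z
      using mult_right_mono[OF lower[of z] gauss_density_nonneg[of \<sigma> "x - z"]] by (simp add: algebra_simps)
  qed
  finally show ?thesis .
qed

lemma eventually_smoothed_density_gt:
  fixes p :: "'a::euclidean_space \<Rightarrow> real"
  assumes int: "integrable lborel p" and pos: "\<And>z. p z > 0" and cont: "isCont p x" and c: "c < p x"
  shows "eventually (\<lambda>\<sigma>. c < smoothed_density p \<sigma> x) (at_right 0)"
proof -
  define \<epsilon> where "\<epsilon> = (p x - c) / 2"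
  have \<epsilon>: "\<epsilon> > 0" using c by (simp add: \<epsilon>_def)
  obtain r where r: "r > 0" "\<And>z. dist z x < r \<Longrightarrow> dist (p z) (p x) < \<epsilon>"
    using cont \<epsilon> unfolding continuous_at_eps_delta by blast
  define q where "q = max 0 (p x - \<epsilon>)"
  have near: "q \<le> p z" if "dist z x < r" for z
    using r(2)[OF that] pos[of z] by (auto simp: q_def dist_real_def)
  define A where "A = 8 * real DIM('a) * exp (1/2) / r\<^sup>2"
  have "((\<lambda>\<sigma>. q * A * \<sigma>\<^sup>2) \<longlongrightarrow> q * A * 0\<^sup>2) (at_right 0)"
    by (intro tendsto_intros)
  then have "eventually (\<lambda>\<sigma>. q * A * \<sigma>\<^sup>2 < \<epsilon>) (at_right 0)"
    using \<epsilon> by (intro order_tendstoD(2)) auto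
  moreover have "eventually (\<lambda>\<sigma>::real. \<sigma> > 0) (at_right 0)"
    by (simp add: eventually_at_right_less)
  ultimately show ?thesis
  proof eventually_elim
    case (elim \<sigma>)
    have "q * (1 - A * \<sigma>\<^sup>2) \<le> smoothed_density p \<sigma> x"
      using smoothed_density_ge[OF int elim(2) r(1) _ near] pos by (simp add: A_def q_def less_imp_le)
    moreover have "c \<le> q - \<epsilon>"
      unfolding q_def \<epsilon>_def max_def by (auto simp: field_simps)
    moreover have "q * (1 - A * \<sigma>\<^sup>2) = q - q * A * \<sigma>\<^sup>2"
      by (simp add: algebra_simps)
    ultimately show ?case using elim(1) by linarith
  qed
qed

lemma ln_smoothed_density_le_tangent:
  fixes p :: "'a::euclidean_space \<Rightarrow> real"
  assumes int: "integrable lborel p" and pos: "\<And>z. p z > 0" and \<sigma>: "\<sigma> > 0"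
    and tangent: "\<And>z. ln (p z) \<le> ln (p x\<^sub>0) + g \<bullet> (z - x\<^sub>0)"
  shows "ln (smoothed_density p \<sigma> x) \<le> ln (p x\<^sub>0) + g \<bullet> (x - x\<^sub>0) + \<sigma>\<^sup>2 * (norm g)\<^sup>2 / 2"
proof -
  have "smoothed_density p \<sigma> x \<le> exp ((ln (p x\<^sub>0) - g \<bullet> x\<^sub>0) + g \<bullet> x + \<sigma>\<^sup>2 * (norm g)\<^sup>2 / 2)"
  proof (rule smoothed_density_le_exp_affine[OF int \<sigma>])
    fix z
    have "ln (p z) \<le> (ln (p x\<^sub>0) - g \<bullet> x\<^sub>0) + g \<bullet> z"
      using tangent[of z] by (simp add: inner_diff_right)
    from exp_mono[OF this] show "p z \<le> exp ((ln (p x\<^sub>0) - g \<bullet> x\<^sub>0) + g \<bullet> z)"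
      using pos[of z] by simp
  qed
  from ln_mono[OF this smoothed_density_pos[OF int pos \<sigma>]]
  have "ln (smoothed_density p \<sigma> x) \<le> (ln (p x\<^sub>0) - g \<bullet> x\<^sub>0) + g \<bullet> x + \<sigma>\<^sup>2 * (norm g)\<^sup>2 / 2"
    by simp
  then show ?thesis by (simp add: inner_diff_right)
qed

lemma eventually_ln_smoothed_density_gt:
  fixes p :: "'a::euclidean_space \<Rightarrow> real"
  assumes "integrable lborel p" "\<And>z. p z > 0" "isCont p x" "\<epsilon> > 0"
  shows "eventually (\<lambda>\<sigma>. ln (p x) - \<epsilon> < ln (smoothed_density p \<sigma> x)) (at_right 0)"
proof -
  have "p x * 1 < p x * exp \<epsilon>"
    using assms(2,4) by (intro mult_strict_left_mono) auto
  then have "exp (ln (p x) - \<epsilon>) < p x"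
    using assms(2) by (simp add: exp_diff field_simps)
  from eventually_smoothed_density_gt[OF assms(1-3) this]
  show ?thesis by eventually_elim (use ln_strict_mono[OF _ exp_gt_zero] in fastforce)
qed

section \<open>Proximal points\<close>

lemma concave_on_le_tangent:
  fixes f :: "'a::real_normed_vector \<Rightarrow> real"
  assumes conc: "concave_on UNIV f" and der: "(f has_derivative D) (at x)"
  shows "f z \<le> f x + D (z - x)"
proof -
  define g where "g t = f (x + t *\<^sub>R (z - x))" for t :: real
  have "((\<lambda>t. x + t *\<^sub>R (z - x)) has_derivative (\<lambda>t. t *\<^sub>R (z - x))) (at 0)"
    by (auto intro!: derivative_eq_intros)
  from diff_chain_at[OF this, of f D] der
  have "(g has_derivative (\<lambda>t. t * D (z - x))) (at 0)"
    using has_derivative_linear[OF der]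
    by (simp add: g_def[abs_def] comp_def linear_scale)
  moreover have "(\<lambda>t. t * D (z - x)) = (*) (D (z - x))"
    by (auto simp: fun_eq_iff)
  ultimately have "(g has_field_derivative D (z - x)) (at 0)"
    by (simp add: has_field_derivative_def)
  then have "(g has_field_derivative D (z - x)) (at 0 within {0<..})"
    by (rule has_field_derivative_at_within)
  then have "((\<lambda>t. (g t - g 0) / t) \<longlongrightarrow> D (z - x)) (at_right 0)"
    by (simp add: has_field_derivative_iff)
  \<comment> \<open>by concavity every difference quotient of \<open>g\<close> at \<open>0\<close> is at least \<open>f z - f x\<close>\<close>
  moreover have "eventually (\<lambda>t. f z - f x \<le> (g t - g 0) / t) (at_right 0)"
    unfolding eventually_at_right_field
  proof (intro exI[of _ 1] conjI allI impI)
    fix t :: real assume t: "0 < t" "t < 1"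
    then have "(1 - t) * f x + t * f z \<le> f ((1 - t) *\<^sub>R x + t *\<^sub>R z)"
      using concave_onD[OF conc, of t x z] by auto
    also have "(1 - t) *\<^sub>R x + t *\<^sub>R z = x + t *\<^sub>R (z - x)"
      by (simp add: algebra_simps)
    finally show "f z - f x \<le> (g t - g 0) / t"
      using t by (simp add: g_def field_simps)
  qed simp
  ultimately have "f z - f x \<le> D (z - x)"
    by (intro tendsto_lowerbound) auto
  then show ?thesis by simp
qed

lemma continuous_attains_min_of_coercive:
  fixes f :: "'a::euclidean_space \<Rightarrow> real"
  assumes cont: "continuous_on UNIV f" and coercive: "\<And>x. (norm x)\<^sup>2 / 2 - B * norm x - A \<le> f x"
  shows "\<exists>x. \<forall>z. f x \<le> f z"
proof -
  define R where "R = 2 * \<bar>B\<bar> + 2 * \<bar>A\<bar> + 2 * \<bar>f 0\<bar> + 2"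
  have "\<exists>x\<in>cball 0 R. \<forall>y\<in>cball 0 R. f x \<le> f y"
    by (rule continuous_attains_inf) (auto simp: R_def intro: continuous_on_subset[OF cont])
  then obtain x where x: "\<forall>y\<in>cball 0 R. f x \<le> f y" by blast
  have "f x \<le> f z" for z
  proof (cases "z \<in> cball 0 R")
    case False
    then have "1 * (\<bar>A\<bar> + \<bar>f 0\<bar> + 1) \<le> norm z * (norm z / 2 - B)"
      by (intro mult_mono) (auto simp: R_def)
    then have "f 0 \<le> f z"
      using coercive[of z] by (simp add: power2_eq_square algebra_simps)
    moreover have "f x \<le> f 0" using x by (simp add: R_def)
    ultimately show ?thesis by linarith
  qed (use x in auto)
  then show ?thesis by blast
qed

definition prox_objective :: "real \<Rightarrow> ('a::euclidean_space \<Rightarrow> real) \<Rightarrow> 'a \<Rightarrow> 'a \<Rightarrow> real" where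
  "prox_objective \<tau> \<phi> y x = (1/2) * (norm (y - x))\<^sup>2 + \<tau> * \<phi> x"

lemma prox_eq_arg_min: "prox \<tau> \<phi> y = arg_min (prox_objective \<tau> \<phi> y) (\<lambda>_. True)"
  by (simp add: prox_def prox_objective_def[abs_def])

text \<open>Since \<^const>\<open>prox\<close> is an \<^const>\<open>arg_min\<close>, it is a genuine minimiser only when one exists;
  an affine minorant of \<open>\<phi>\<close> makes the objective coercive.\<close>
lemma prox_minimal:
  fixes \<phi> :: "'a::euclidean_space \<Rightarrow> real"
  assumes cont: "continuous_on UNIV \<phi>" and \<tau>: "\<tau> \<ge> 0" and minorant: "\<And>x. c - g \<bullet> x \<le> \<phi> x"
  shows "prox_objective \<tau> \<phi> y (prox \<tau> \<phi> y) \<le> prox_objective \<tau> \<phi> y z"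
proof -
  have "\<exists>x. \<forall>z. prox_objective \<tau> \<phi> y x \<le> prox_objective \<tau> \<phi> y z"
  proof (rule continuous_attains_min_of_coercive)
    show "continuous_on UNIV (prox_objective \<tau> \<phi> y)"
      unfolding prox_objective_def[abs_def] by (intro continuous_intros cont)
    fix x
    have "(norm (y - x))\<^sup>2 = (norm y)\<^sup>2 - 2 * (y \<bullet> x) + (norm x)\<^sup>2"
      by (simp add: power2_norm_eq_inner inner_diff_left inner_diff_right inner_commute)
    then have "(norm x)\<^sup>2 / 2 - norm y * norm x \<le> (1/2) * (norm (y - x))\<^sup>2"
      using norm_cauchy_schwarz[of y x] zero_le_power2[of "norm y"] by linarith
    moreover have "\<tau> * c - \<tau> * norm g * norm x \<le> \<tau> * \<phi> x"
      using mult_left_mono[OF norm_cauchy_schwarz[of g x] \<tau>] mult_left_mono[OF minorant[of x] \<tau>]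
      by (simp add: algebra_simps)
    moreover have "(norm x)\<^sup>2 / 2 - (norm y + \<tau> * norm g) * norm x - (- \<tau> * c)
        = ((norm x)\<^sup>2 / 2 - norm y * norm x) + (\<tau> * c - \<tau> * norm g * norm x)"
      by (simp add: algebra_simps)
    ultimately show "(norm x)\<^sup>2 / 2 - (norm y + \<tau> * norm g) * norm x - (- \<tau> * c) \<le> prox_objective \<tau> \<phi> y x"
      unfolding prox_objective_def by linarith
  qed
  then obtain x where x: "\<forall>z. prox_objective \<tau> \<phi> y x \<le> prox_objective \<tau> \<phi> y z" ..
  show ?thesis
    unfolding prox_eq_arg_min by (rule arg_minI[of "\<lambda>_. True" x]) (use x in \<open>auto simp: not_less\<close>)
qed

lemma prox_objective_gradient_eq_zero:
  fixes \<phi> :: "'a::euclidean_space \<Rightarrow> real"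
  assumes min: "\<And>z. prox_objective \<tau> \<phi> y x \<le> prox_objective \<tau> \<phi> y z"
    and der: "(\<phi> has_derivative (\<lambda>h. d \<bullet> h)) (at x)"
  shows "x - y + \<tau> *\<^sub>R d = 0"
proof -
  have "(prox_objective \<tau> \<phi> y has_derivative (\<lambda>h. (x - y + \<tau> *\<^sub>R d) \<bullet> h)) (at x)"
    unfolding prox_objective_def[abs_def] power2_norm_eq_inner
    by (auto intro!: derivative_eq_intros der simp: inner_diff_left inner_diff_right inner_add_left
        inner_commute algebra_simps)
  then have "(\<lambda>h. (x - y + \<tau> *\<^sub>R d) \<bullet> h) = (\<lambda>h. 0)"
    by (rule has_derivative_local_min) (simp add: min)
  then show ?thesis by (metis inner_eq_zero_iff)
qed

text \<open>The three-point identity \<open>|y - x|\<^sup>2 = |y - x\<^sub>0|\<^sup>2 + |x - x\<^sub>0|\<^sup>2 + 2 (x\<^sub>0 - y) \<bullet> (x - x\<^sub>0)\<close>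
  with \<open>x\<^sub>0 - y = \<tau> g\<close> cancels the linear term of the minorant.\<close>
lemma prox_objective_ge_quadratic:
  fixes \<phi> \<psi> :: "'a::euclidean_space \<Rightarrow> real"
  assumes foc: "x\<^sub>0 - y = \<tau> *\<^sub>R g" and \<tau>: "\<tau> \<ge> 0"
    and minorant: "\<psi> x\<^sub>0 - \<delta> - g \<bullet> (x - x\<^sub>0) \<le> \<phi> x"
  shows "prox_objective \<tau> \<psi> y x\<^sub>0 + (1/2) * (norm (x - x\<^sub>0))\<^sup>2 - \<tau> * \<delta> \<le> prox_objective \<tau> \<phi> y x"
proof -
  have "(norm (y - x))\<^sup>2 = (norm (y - x\<^sub>0))\<^sup>2 + (norm (x - x\<^sub>0))\<^sup>2 + 2 * ((x\<^sub>0 - y) \<bullet> (x - x\<^sub>0))"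
    by (simp add: power2_norm_eq_inner inner_diff_left inner_diff_right inner_commute algebra_simps)
  also have "(x\<^sub>0 - y) \<bullet> (x - x\<^sub>0) = \<tau> * (g \<bullet> (x - x\<^sub>0))"
    by (simp add: foc)
  finally have "(norm (y - x))\<^sup>2 = (norm (y - x\<^sub>0))\<^sup>2 + (norm (x - x\<^sub>0))\<^sup>2 + 2 * (\<tau> * (g \<bullet> (x - x\<^sub>0)))" .
  moreover have "\<tau> * (\<psi> x\<^sub>0 - \<delta> - g \<bullet> (x - x\<^sub>0)) \<le> \<tau> * \<phi> x"
    using minorant \<tau> by (rule mult_left_mono)
  ultimately show ?thesis
    unfolding prox_objective_def by (simp add: algebra_simps)
qed

lemma tendsto_minimisers_of_quadratic_growth:
  fixes x :: "'b \<Rightarrow> 'a::real_normed_vector"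
  assumes min: "eventually (\<lambda>s. f s (x s) \<le> f s x\<^sub>0) F"
    and growth: "eventually (\<lambda>s. \<forall>z. c + (1/2) * (norm (z - x\<^sub>0))\<^sup>2 - e s \<le> f s z) F"
    and e: "(e \<longlongrightarrow> 0) F"
    and upper: "\<And>\<epsilon>. \<epsilon> > 0 \<Longrightarrow> eventually (\<lambda>s. f s x\<^sub>0 < c + \<epsilon>) F"
  shows "(x \<longlongrightarrow> x\<^sub>0) F"
proof (rule tendstoI)
  fix \<epsilon> :: real assume "\<epsilon> > 0"
  then have \<epsilon>: "\<epsilon>\<^sup>2 / 4 > 0" by simp
  from min growth order_tendstoD(2)[OF e \<epsilon>] upper[OF \<epsilon>]
  show "eventually (\<lambda>s. dist (x s) x\<^sub>0 < \<epsilon>) F"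
  proof eventually_elim
    case (elim s)
    then have "(norm (x s - x\<^sub>0))\<^sup>2 < \<epsilon>\<^sup>2"
      using spec[OF elim(2), of "x s"] by linarith
    then show ?case using \<open>\<epsilon> > 0\<close> by (simp add: dist_norm power_less_imp_less_base)
  qed
qed

section \<open>Smoothing a log-concave density\<close>

context
  fixes p :: "'a::euclidean_space \<Rightarrow> real" and G :: "'a \<Rightarrow> 'a"
  assumes pos: "\<And>x. p x > 0" and integrable: "integrable lborel p"
    and log_concave: "concave_on UNIV (\<lambda>x. ln (p x))"
    and gradient: "\<And>x. ((\<lambda>x. ln (p x)) has_derivative (\<lambda>h. G x \<bullet> h)) (at x)"
begin

lemma ln_density_le_tangent: "ln (p z) \<le> ln (p a) + G a \<bullet> (z - a)"
  using concave_on_le_tangent[OF log_concave gradient] .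

lemma isCont_density: "isCont p x"
proof -
  have "isCont (exp \<circ> (\<lambda>x. ln (p x))) x"
    by (intro continuous_at_compose has_derivative_continuous[OF gradient] isCont_exp)
  then show ?thesis using pos by (simp add: comp_def)
qed

lemma prox_neg_ln_density_minimal:
  assumes "\<tau> \<ge> 0"
  shows "prox_objective \<tau> (\<lambda>x. - ln (p x)) y (prox \<tau> (\<lambda>x. - ln (p x)) y)
    \<le> prox_objective \<tau> (\<lambda>x. - ln (p x)) y z"
  using ln_density_le_tangent[where a = 0] assms
  by (intro prox_minimal[where c = "- ln (p 0)" and g = "G 0"] continuous_on_minus
      continuous_at_imp_continuous_on ballI has_derivative_continuous[OF gradient])
    (auto simp: algebra_simps)

lemma prox_neg_ln_density_optimality:
  assumes "\<tau> \<ge> 0"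
  shows "prox \<tau> (\<lambda>x. - ln (p x)) y - y = \<tau> *\<^sub>R G (prox \<tau> (\<lambda>x. - ln (p x)) y)"
proof -
  let ?x\<^sub>0 = "prox \<tau> (\<lambda>x. - ln (p x)) y"
  have "((\<lambda>x. - ln (p x)) has_derivative (\<lambda>h. (- G ?x\<^sub>0) \<bullet> h)) (at ?x\<^sub>0)"
    using has_derivative_minus[OF gradient] by simp
  from prox_objective_gradient_eq_zero[OF prox_neg_ln_density_minimal[OF assms] this]
  show ?thesis by (simp add: algebra_simps)
qed

lemma prox_neg_ln_smoothed_density_minimal:
  assumes "\<sigma> > 0" "\<tau> \<ge> 0"
  shows "prox_objective \<tau> (\<lambda>x. - ln (smoothed_density p \<sigma> x)) y (prox \<tau> (\<lambda>x. - ln (smoothed_density p \<sigma> x)) y)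
    \<le> prox_objective \<tau> (\<lambda>x. - ln (smoothed_density p \<sigma> x)) y z"
  using ln_smoothed_density_le_tangent[OF integrable pos assms(1) ln_density_le_tangent[where a = 0]] assms(2)
  by (intro prox_minimal[where c = "- ln (p 0) - \<sigma>\<^sup>2 * (norm (G 0))\<^sup>2 / 2" and g = "G 0"]
      continuous_on_minus continuous_on_ln continuous_on_smoothed_density[OF integrable])
    (auto simp: algebra_simps less_imp_neq[symmetric] smoothed_density_pos[OF integrable pos assms(1)])

lemma prox_objective_smoothed_quadratic_growth:
  fixes y :: 'a
  assumes "\<sigma> > 0" "\<tau> \<ge> 0"
  defines "x\<^sub>0 \<equiv> prox \<tau> (\<lambda>x. - ln (p x)) y"
  shows "prox_objective \<tau> (\<lambda>x. - ln (p x)) y x\<^sub>0 + (1/2) * (norm (x - x\<^sub>0))\<^sup>2 - \<tau> * (\<sigma>\<^sup>2 * (norm (G x\<^sub>0))\<^sup>2 / 2)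
    \<le> prox_objective \<tau> (\<lambda>x. - ln (smoothed_density p \<sigma> x)) y x"
proof (rule prox_objective_ge_quadratic[where \<psi> = "\<lambda>x. - ln (p x)"])
  show "x\<^sub>0 - y = \<tau> *\<^sub>R G x\<^sub>0"
    unfolding x\<^sub>0_def using assms(2) by (rule prox_neg_ln_density_optimality)
  show "- ln (p x\<^sub>0) - \<sigma>\<^sup>2 * (norm (G x\<^sub>0))\<^sup>2 / 2 - G x\<^sub>0 \<bullet> (x - x\<^sub>0) \<le> - ln (smoothed_density p \<sigma> x)"
    using ln_smoothed_density_le_tangent[OF integrable pos assms(1) ln_density_le_tangent[where a = x\<^sub>0], of x]
    by simp
qed fact

lemma eventually_prox_objective_smoothed_less:
  assumes "\<tau> > 0" "\<epsilon> > 0"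
  shows "eventually (\<lambda>\<sigma>. prox_objective \<tau> (\<lambda>x. - ln (smoothed_density p \<sigma> x)) y x
    < prox_objective \<tau> (\<lambda>x. - ln (p x)) y x + \<epsilon>) (at_right 0)"
proof -
  from assms have "\<epsilon> / \<tau> > 0" by simp
  from eventually_ln_smoothed_density_gt[OF integrable pos isCont_density[of x] this]
  show ?thesis
    by eventually_elim (use assms(1) in \<open>simp add: prox_objective_def field_simps\<close>)
qed

theorem tendsto_prox_neg_ln_smoothed_density:
  assumes \<tau>: "\<tau> > 0"
  shows "((\<lambda>\<sigma>. prox \<tau> (\<lambda>x. - ln (smoothed_density p \<sigma> x)) y) \<longlongrightarrow> prox \<tau> (\<lambda>x. - ln (p x)) y) (at_right 0)"
proof -
  define F where "F \<sigma> = prox_objective \<tau> (\<lambda>x. - ln (smoothed_density p \<sigma> x)) y" for \<sigma>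
  define x\<^sub>0 where "x\<^sub>0 = prox \<tau> (\<lambda>x. - ln (p x)) y"
  define e where "e \<sigma> = \<tau> * (\<sigma>\<^sup>2 * (norm (G x\<^sub>0))\<^sup>2 / 2)" for \<sigma> :: real
  have "eventually (\<lambda>\<sigma>. F \<sigma> (prox \<tau> (\<lambda>x. - ln (smoothed_density p \<sigma> x)) y) \<le> F \<sigma> x\<^sub>0) (at_right 0)"
    using eventually_at_right_less
    by eventually_elim (use \<tau> in \<open>simp add: F_def prox_neg_ln_smoothed_density_minimal\<close>)
  moreover have "eventually (\<lambda>\<sigma>. \<forall>x. prox_objective \<tau> (\<lambda>x. - ln (p x)) y x\<^sub>0
      + (1/2) * (norm (x - x\<^sub>0))\<^sup>2 - e \<sigma> \<le> F \<sigma> x) (at_right 0)"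
    using eventually_at_right_less
    unfolding F_def e_def x\<^sub>0_def
    by eventually_elim (intro allI prox_objective_smoothed_quadratic_growth, use \<tau> in auto)
  moreover have "(e \<longlongrightarrow> 0) (at_right 0)"
    unfolding e_def[abs_def] by (auto intro!: tendsto_eq_intros)
  moreover have "eventually (\<lambda>\<sigma>. F \<sigma> x\<^sub>0 < prox_objective \<tau> (\<lambda>x. - ln (p x)) y x\<^sub>0 + \<epsilon>) (at_right 0)"
    if "\<epsilon> > 0" for \<epsilon>
    unfolding F_def using \<tau> that by (rule eventually_prox_objective_smoothed_less)
  ultimately show ?thesis
    unfolding x\<^sub>0_def[symmetric] by (rule tendsto_minimisers_of_quadratic_growth)
qed

end

theorem lemma4:
  fixes p :: "'a::euclidean_space \<Rightarrow> real" and \<tau> :: real and y :: 'a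
  assumes pos: "\<And>x. p x > 0"
    and integrable: "integrable lborel p"
    and total: "(\<integral>x. p x \<partial>lborel) = 1"
    and logconcave: "concave_on UNIV (\<lambda>x. ln (p x))"
    and smooth: "thrice_diff_bdd_third (\<lambda>x. ln (p x))"
    and tau: "\<tau> > 0"
  shows "((\<lambda>\<sigma>. prox \<tau> (\<lambda>x. - ln (smoothed_density p \<sigma> x)) y)
           \<longlongrightarrow> prox \<tau> (\<lambda>x. - ln (p x)) y) (at_right 0)"
proof -
  obtain G where "\<And>x. ((\<lambda>x. ln (p x)) has_derivative (\<lambda>h. G x \<bullet> h)) (at x)"
    using smooth unfolding thrice_diff_bdd_third_def by blast
  from tendsto_prox_neg_ln_smoothed_density[OF pos integrable logconcave this tau]
  show ?thesis .
qed

end
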